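(* Let $X$, $Z$ be topological vector spaces, $C\subseteq Z$ a nonempty closed convex cone with $C^-\neq\{0\}$, $f:X\to\mathcal{F}(Z,C)$ convex and $x_0\in{\rm dom\,} f$. If $f$ is lattice-bounded above on a neighborhood of $x_0$, or efficient at $x_0$, or upper lattice-semicontinuous at $x_0$, or lower continuous at $x_0$, then $f$ has the corresponding property (lattice-bounded above on a neighborhood of $x$, efficient at $x$, upper lattice-semicontinuous at $x$, lower continuous at $x$, respectively) at every $x\in\operatorname{Int}({\rm dom\,} f)$.
   Context: $\mathcal{F}(Z,C)=\{A\subseteq Z\colon A=\operatorname{cl}(A+C)\}$ (empty set included); $C^-=\{z^*\in Z^*\colon z^*(z)\le0\ \forall z\in C\}$; ${\rm dom\,} f=\{x\colon f(x)\neq\emptyset\}$. $f$ is convex iff $tf(x_1)+(1-t)f(x_2)\subseteq f(tx_1+(1-t)x_2)$ for all $x_1,x_2$, $t\in(0,1)$. Lattice-bounded above on $M$: there is $a\in Z$ with $a\in f(x)$ for all $x\in M$. Efficient at $x_0$: there exist a neighborhood $U$ of $x_0$ and a bounded set $B\subseteq Z$ (absorbed by every neighborhood of $0$) with $f(x)\cap B\neq\emptyset$ for all $x\in U$. Upper lattice-semicontinuous at $x_0$: $f(x_0)\subseteq\operatorname{cl}\bigcup_{U\in\mathcal{N}(x_0)}\bigcap_{x\in U}f(x)$, $\mathcal{N}(x_0)$ the neighborhoods of $x_0$. Lower continuous at $x_0$: for every $z_0\in f(x_0)$ and every neighborhood $V$ of $z_0$ there is a neighborhood $U$ of $x_0$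 with $f(x)\cap V\neq\emptyset$ for all $x\in U$. *)

theory Defs
  imports "HOL-Analysis.Analysis"
begin

definition is_tvs :: "('a::{real_vector,topological_space}) itself \<Rightarrow> bool" where
  "is_tvs _ \<longleftrightarrow>
     continuous_on UNIV (\<lambda>p::'a \<times> 'a. fst p + snd p) \<and>
     continuous_on UNIV (\<lambda>p::real \<times> 'a. fst p *\<^sub>R snd p)"

definition nbhds :: "'a::topological_space \<Rightarrow> 'a set set" where
  "nbhds x = {U. \<exists>V. open V \<and> x \<in> V \<and> V \<subseteq> U}"

definition msum :: "'a::real_vector set \<Rightarrow> 'a set \<Rightarrow> 'a set" where
  "msum A B = {a + b | a b. a \<in> A \<and> b \<in> B}"

definition FZC :: "'z::{real_vector,topological_space} set \<Rightarrow> 'z set set" where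
  "FZC C = {A. A = closure (msum A C)}"

definition neg_dual_cone :: "'z::{real_vector,topological_space} set \<Rightarrow> ('z \<Rightarrow> real) set" where
  "neg_dual_cone C = {g. linear g \<and> continuous_on UNIV g \<and> (\<forall>z\<in>C. g z \<le> 0)}"

definition sv_dom :: "('x \<Rightarrow> 'z set) \<Rightarrow> 'x set" where
  "sv_dom f = {x. f x \<noteq> {}}"

definition sv_convex :: "('x::real_vector \<Rightarrow> 'z::real_vector set) \<Rightarrow> bool" where
  "sv_convex f \<longleftrightarrow> (\<forall>x1 x2 t. 0 < t \<and> t < 1 \<longrightarrow>
      msum ((\<lambda>z. t *\<^sub>R z) ` f x1) ((\<lambda>z. (1 - t) *\<^sub>R z) ` f x2)
        \<subseteq> f (t *\<^sub>R x1 + (1 - t) *\<^sub>R x2))"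

definition lattice_bounded_above_on :: "('x \<Rightarrow> 'z set) \<Rightarrow> 'x set \<Rightarrow> bool" where
  "lattice_bounded_above_on f M \<longleftrightarrow> (\<exists>a. \<forall>x\<in>M. a \<in> f x)"

definition lattice_bounded_above_near :: "('x::topological_space \<Rightarrow> 'z set) \<Rightarrow> 'x \<Rightarrow> bool" where
  "lattice_bounded_above_near f x0 \<longleftrightarrow> (\<exists>U\<in>nbhds x0. lattice_bounded_above_on f U)"

definition tvs_bounded :: "'z::{real_vector,topological_space} set \<Rightarrow> bool" where
  "tvs_bounded B \<longleftrightarrow> (\<forall>V\<in>nbhds 0. \<exists>r>0. \<forall>t. \<bar>t\<bar> \<ge> r \<longrightarrow> B \<subseteq> (\<lambda>v. t *\<^sub>R v) ` V)"

definition efficient_at :: "('x::topological_space \<Rightarrow> 'z::{real_vector,topological_space} set) \<Rightarrow> 'x \<Rightarrow> bool" where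
  "efficient_at f x0 \<longleftrightarrow> (\<exists>U\<in>nbhds x0. \<exists>B. tvs_bounded B \<and> (\<forall>x\<in>U. f x \<inter> B \<noteq> {}))"

definition upper_lattice_sc :: "('x::topological_space \<Rightarrow> 'z::topological_space set) \<Rightarrow> 'x \<Rightarrow> bool" where
  "upper_lattice_sc f x0 \<longleftrightarrow> f x0 \<subseteq> closure (\<Union>U\<in>nbhds x0. \<Inter>x\<in>U. f x)"

definition lower_continuous_at :: "('x::topological_space \<Rightarrow> 'z::topological_space set) \<Rightarrow> 'x \<Rightarrow> bool" where
  "lower_continuous_at f x0 \<longleftrightarrow>
     (\<forall>z0\<in>f x0. \<forall>V\<in>nbhds z0. \<exists>U\<in>nbhds x0. \<forall>x\<in>U. f x \<inter> V \<noteq> {})"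

end

theory Submission
  imports Defs
begin

text \<open>Write \<open>x \<in> Int (dom f)\<close> as \<open>x = t x\<^sub>0 + (1 - t) y\<close> with \<open>0 < t < 1\<close> and
  \<open>y \<in> dom f\<close>, and fix \<open>b \<in> f y\<close>. Convexity gives \<open>t a + (1 - t) b \<in> f (x + t (u - x\<^sub>0))\<close>
  whenever \<open>a \<in> f u\<close>, and \<open>u \<mapsto> x + t (u - x\<^sub>0)\<close> maps neighborhoods of \<open>x\<^sub>0\<close> onto
  neighborhoods of \<open>x\<close>. So a common element, a bounded set of elements, or elements in a
  prescribed open set, found for all \<open>u\<close> near \<open>x\<^sub>0\<close>, are transported by the affine map
  \<open>a \<mapsto> t a + (1 - t) b\<close> to all points near \<open>x\<close>. Upper lattice-semicontinuity reduces to
  lattice-boundedness: if \<open>a \<in> f u\<close> for all \<open>u\<close> near \<open>x\<close>, then for \<open>z \<in> f x\<close> the points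
  \<open>k a + (1 - k) z\<close>, which tend to \<open>z\<close> as \<open>k \<rightarrow> 0\<close>, lie in \<open>f\<close> on a whole neighborhood of \<open>x\<close>.\<close>

lemma open_vimage_continuous_on_UNIV:
  "continuous_on UNIV h \<Longrightarrow> open V \<Longrightarrow> open (h -` V)"
  using continuous_on_open_vimage[of UNIV h] by auto

lemma tvs_continuous_on_add:
  fixes f g :: "'b::topological_space \<Rightarrow> 'a::{real_vector,topological_space}"
  assumes "is_tvs TYPE('a)" "continuous_on UNIV f" "continuous_on UNIV g"
  shows "continuous_on UNIV (\<lambda>x. f x + g x)"
proof -
  have "continuous_on UNIV (\<lambda>p::'a \<times> 'a. fst p + snd p)"
    using assms(1) unfolding is_tvs_def by auto
  from continuous_on_compose2[OF this continuous_on_Pair[OF assms(2,3)]]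
  show ?thesis by simp
qed

lemma tvs_continuous_on_scaleR:
  fixes f :: "'b::topological_space \<Rightarrow> real" and g :: "'b \<Rightarrow> 'a::{real_vector,topological_space}"
  assumes "is_tvs TYPE('a)" "continuous_on UNIV f" "continuous_on UNIV g"
  shows "continuous_on UNIV (\<lambda>x. f x *\<^sub>R g x)"
proof -
  have "continuous_on UNIV (\<lambda>p::real \<times> 'a. fst p *\<^sub>R snd p)"
    using assms(1) unfolding is_tvs_def by auto
  from continuous_on_compose2[OF this continuous_on_Pair[OF assms(2,3)]]
  show ?thesis by simp
qed

lemma tvs_continuous_on_affine:
  fixes c :: "'a::{real_vector,topological_space}"
  assumes "is_tvs TYPE('a)"
  shows "continuous_on UNIV (\<lambda>w. c + l *\<^sub>R w)"
  by (intro tvs_continuous_on_add tvs_continuous_on_scaleR assms continuous_intros)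

lemma tvs_affine_image_nbhds:
  fixes x x0 :: "'a::{real_vector,topological_space}"
  assumes "is_tvs TYPE('a)" "U \<in> nbhds x0" "l > 0"
  shows "(\<lambda>u. x + l *\<^sub>R (u - x0)) ` U \<in> nbhds x"
proof -
  obtain V where V: "open V" "x0 \<in> V" "V \<subseteq> U"
    using assms(2) unfolding nbhds_def by auto
  define h where "h = (\<lambda>w. (x0 - (1/l) *\<^sub>R x) + (1/l) *\<^sub>R w)"
  have "open (h -` V)"
    unfolding h_def by (rule open_vimage_continuous_on_UNIV[OF tvs_continuous_on_affine[OF assms(1)] V(1)])
  moreover have "x \<in> h -` V"
    using V unfolding h_def by simp
  moreover have "h -` V \<subseteq> (\<lambda>u. x + l *\<^sub>R (u - x0)) ` U"
  proof
    fix w assume "w \<in> h -` V"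
    moreover have "w = x + l *\<^sub>R (h w - x0)"
      unfolding h_def using assms(3) by (simp add: algebra_simps)
    ultimately show "w \<in> (\<lambda>u. x + l *\<^sub>R (u - x0)) ` U"
      using V(3) by blast
  qed
  ultimately show ?thesis
    unfolding nbhds_def by blast
qed

lemma tvs_open_contains_convex_combination:
  fixes w z :: "'a::{real_vector,topological_space}"
  assumes "is_tvs TYPE('a)" "open T" "z \<in> T"
  obtains k where "0 < k" "k < 1" "k *\<^sub>R w + (1 - k) *\<^sub>R z \<in> T"
proof -
  define g where "g = (\<lambda>k::real. k *\<^sub>R w + (1 - k) *\<^sub>R z)"
  have "continuous_on UNIV g"
    unfolding g_def by (intro tvs_continuous_on_add tvs_continuous_on_scaleR assms(1) continuous_intros)
  then have "open (g -` T)"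
    using assms(2) by (rule open_vimage_continuous_on_UNIV)
  moreover have "0 \<in> g -` T"
    using assms unfolding g_def by simp
  ultimately obtain e where e: "e > 0" "ball 0 e \<subseteq> g -` T"
    using open_contains_ball by blast
  define k where "k = min (e/2) (1/2)"
  have "0 < k" "k < 1" "k \<in> ball 0 e"
    using e unfolding k_def by auto
  with e(2) have "g k \<in> T" "0 < k" "k < 1"
    by blast+
  then show ?thesis
    using that unfolding g_def by blast
qed

lemma tvs_interior_convex_combination:
  fixes x x0 :: "'a::{real_vector,topological_space}"
  assumes "is_tvs TYPE('a)" "x \<in> interior S"
  obtains t y where "0 < t" "t < 1" "y \<in> S" "x = t *\<^sub>R x0 + (1 - t) *\<^sub>R y"
proof -
  define g where "g = (\<lambda>e::real. x + e *\<^sub>R (x - x0))"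
  have "continuous_on UNIV g"
    unfolding g_def by (intro tvs_continuous_on_add tvs_continuous_on_scaleR assms(1) continuous_intros)
  then have "open (g -` interior S)"
    by (rule open_vimage_continuous_on_UNIV) simp
  moreover have "0 \<in> g -` interior S"
    using assms unfolding g_def by simp
  ultimately obtain e where e: "e > 0" "ball 0 e \<subseteq> g -` interior S"
    using open_contains_ball by blast
  define d where "d = e/2"
  have "d > 0" "d \<in> ball 0 e"
    using e unfolding d_def by auto
  with e(2) interior_subset have d: "d > 0" "g d \<in> S"
    by blast+
  define t where "t = d / (1 + d)"
  have "t *\<^sub>R x0 + (1 - t) *\<^sub>R g d = (1/(1+d)) *\<^sub>R ((1+d) *\<^sub>R x)"
    unfolding g_def t_def using d by (simp add: algebra_simps divide_simps)
  also have "\<dots> = x"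
    using d by simp
  finally show ?thesis
    using that[of t "g d"] d unfolding t_def by simp
qed

lemma tvs_nbhds_zero_half:
  fixes V :: "'a::{real_vector,topological_space} set"
  assumes "is_tvs TYPE('a)" "V \<in> nbhds 0"
  obtains W where "open W" "0 \<in> W" "\<And>w1 w2. w1 \<in> W \<Longrightarrow> w2 \<in> W \<Longrightarrow> w1 + w2 \<in> V"
proof -
  obtain V1 where V1: "open V1" "0 \<in> V1" "V1 \<subseteq> V"
    using assms(2) unfolding nbhds_def by auto
  have "continuous_on UNIV (\<lambda>p::'a \<times> 'a. fst p + snd p)"
    using assms(1) unfolding is_tvs_def by auto
  then have "open ((\<lambda>p::'a \<times> 'a. fst p + snd p) -` V1)"
    using V1(1) by (rule open_vimage_continuous_on_UNIV)
  moreover have "(0, 0) \<in> (\<lambda>p::'a \<times> 'a. fst p + snd p) -` V1"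
    using V1 by simp
  ultimately obtain A1 A2 where A: "open A1" "open A2" "(0, 0) \<in> A1 \<times> A2"
      "A1 \<times> A2 \<subseteq> (\<lambda>p::'a \<times> 'a. fst p + snd p) -` V1"
    by (rule open_prod_elim)
  show ?thesis
  proof (rule that[of "A1 \<inter> A2"])
    fix w1 w2 assume "w1 \<in> A1 \<inter> A2" "w2 \<in> A1 \<inter> A2"
    then have "w1 + w2 \<in> V1"
      using A(4) by force
    then show "w1 + w2 \<in> V"
      using V1(3) by blast
  qed (use A in auto)
qed

lemma tvs_bounded_scaleR_image:
  fixes B :: "'a::{real_vector,topological_space} set"
  assumes "tvs_bounded B" "t > 0"
  shows "tvs_bounded ((\<lambda>a. t *\<^sub>R a) ` B)"
  unfolding tvs_bounded_def
proof
  fix V :: "'a set" assume "V \<in> nbhds 0"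
  then obtain r where r: "r > 0" "\<forall>s. \<bar>s\<bar> \<ge> r \<longrightarrow> B \<subseteq> (\<lambda>v. s *\<^sub>R v) ` V"
    using assms(1) unfolding tvs_bounded_def by blast
  have "(\<lambda>a. t *\<^sub>R a) ` B \<subseteq> (\<lambda>v. s *\<^sub>R v) ` V" if s: "\<bar>s\<bar> \<ge> t * r" for s
  proof
    fix q assume "q \<in> (\<lambda>a. t *\<^sub>R a) ` B"
    then obtain a where a: "a \<in> B" "q = t *\<^sub>R a" by auto
    have "\<bar>s / t\<bar> \<ge> r"
      using s assms(2) by (simp add: abs_divide field_simps)
    then obtain v where v: "v \<in> V" "a = (s / t) *\<^sub>R v"
      using r a(1) by blast
    then have "q = s *\<^sub>R v"
      using a(2) assms(2) by simp
    then show "q \<in> (\<lambda>v. s *\<^sub>R v) ` V"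
      using v(1) by blast
  qed
  then show "\<exists>r>0. \<forall>s. \<bar>s\<bar> \<ge> r \<longrightarrow> (\<lambda>a. t *\<^sub>R a) ` B \<subseteq> (\<lambda>v. s *\<^sub>R v) ` V"
    using r assms(2) by (intro exI[of _ "t * r"]) auto
qed

lemma tvs_bounded_translation:
  fixes B :: "'a::{real_vector,topological_space} set"
  assumes tvs: "is_tvs TYPE('a)" and bounded: "tvs_bounded B"
  shows "tvs_bounded ((\<lambda>a. a + c) ` B)"
  unfolding tvs_bounded_def
proof
  fix V :: "'a set" assume "V \<in> nbhds 0"
  then obtain W where W: "open W" "0 \<in> W" "\<And>w1 w2. w1 \<in> W \<Longrightarrow> w2 \<in> W \<Longrightarrow> w1 + w2 \<in> V"
    using tvs_nbhds_zero_half[OF tvs] by blast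
  have "W \<in> nbhds 0"
    using W(1,2) unfolding nbhds_def by auto
  then obtain r1 where r1: "r1 > 0" "\<forall>s. \<bar>s\<bar> \<ge> r1 \<longrightarrow> B \<subseteq> (\<lambda>v. s *\<^sub>R v) ` W"
    using bounded unfolding tvs_bounded_def by blast
  have "continuous_on UNIV (\<lambda>s::real. s *\<^sub>R c)"
    by (intro tvs_continuous_on_scaleR[OF tvs] continuous_intros)
  then have "open ((\<lambda>s::real. s *\<^sub>R c) -` W)"
    using W(1) by (rule open_vimage_continuous_on_UNIV)
  moreover have "0 \<in> (\<lambda>s::real. s *\<^sub>R c) -` W"
    using W(2) by simp
  ultimately obtain e where e: "e > 0" "ball 0 e \<subseteq> (\<lambda>s::real. s *\<^sub>R c) -` W"
    using open_contains_ball by blast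
  define r where "r = max r1 (2 / e)"
  have "(\<lambda>a. a + c) ` B \<subseteq> (\<lambda>v. s *\<^sub>R v) ` V" if s: "\<bar>s\<bar> \<ge> r" for s
  proof
    fix q assume "q \<in> (\<lambda>a. a + c) ` B"
    then obtain a where a: "a \<in> B" "q = a + c" by auto
    have "\<bar>s\<bar> \<ge> r1" "\<bar>s\<bar> \<ge> 2 / e"
      using s unfolding r_def by auto
    then have "s \<noteq> 0" "\<bar>s\<bar> * e \<ge> 2"
      using r1(1) e(1) by (auto simp: pos_divide_le_eq)
    then have "\<bar>1 / s\<bar> < e"
      by (simp add: abs_divide pos_divide_less_eq mult.commute)
    then have "1 / s \<in> ball 0 e"
      by (simp add: dist_real_def)
    then have "(1 / s) *\<^sub>R c \<in> W"
      using e(2) by blast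
    moreover obtain w where w: "w \<in> W" "a = s *\<^sub>R w"
      using r1(2) \<open>\<bar>s\<bar> \<ge> r1\<close> a(1) by blast
    moreover have "q = s *\<^sub>R (w + (1 / s) *\<^sub>R c)"
      using a(2) w(2) \<open>s \<noteq> 0\<close> by (simp add: algebra_simps)
    ultimately show "q \<in> (\<lambda>v. s *\<^sub>R v) ` V"
      using W(3) by blast
  qed
  moreover have "r > 0"
    using r1(1) unfolding r_def by (simp add: less_max_iff_disj)
  ultimately show "\<exists>r>0. \<forall>s. \<bar>s\<bar> \<ge> r \<longrightarrow> (\<lambda>a. a + c) ` B \<subseteq> (\<lambda>v. s *\<^sub>R v) ` V"
    by blast
qed

lemma tvs_bounded_affine_image:
  fixes B :: "'a::{real_vector,topological_space} set"
  assumes "is_tvs TYPE('a)" "tvs_bounded B" "t > 0"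
  shows "tvs_bounded ((\<lambda>a. t *\<^sub>R a + c) ` B)"
proof -
  have "(\<lambda>a. t *\<^sub>R a + c) ` B = (\<lambda>a. a + c) ` (\<lambda>a. t *\<^sub>R a) ` B"
    by (simp add: image_image)
  then show ?thesis
    using tvs_bounded_translation[OF assms(1) tvs_bounded_scaleR_image[OF assms(2,3)]] by simp
qed

lemma sv_convex_shift:
  assumes "sv_convex f" "0 < t" "t < 1" "x = t *\<^sub>R x0 + (1 - t) *\<^sub>R y" "a \<in> f u" "b \<in> f y"
  shows "t *\<^sub>R a + (1 - t) *\<^sub>R b \<in> f (x + t *\<^sub>R (u - x0))"
proof -
  have "t *\<^sub>R a + (1 - t) *\<^sub>R b \<in> f (t *\<^sub>R u + (1 - t) *\<^sub>R y)"
    using assms(1-3,5,6) unfolding sv_convex_def msum_def by blast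
  moreover have "x + t *\<^sub>R (u - x0) = t *\<^sub>R u + (1 - t) *\<^sub>R y"
    using assms(4) by (simp add: algebra_simps)
  ultimately show ?thesis
    by simp
qed

lemma sv_convex_shift_at:
  assumes "sv_convex f" "0 < t" "t < 1" "a \<in> f u" "z \<in> f x"
  shows "t *\<^sub>R a + (1 - t) *\<^sub>R z \<in> f (x + t *\<^sub>R (u - x))"
  by (rule sv_convex_shift[OF assms(1-3) _ assms(4,5)]) (simp add: algebra_simps)

lemma lattice_bounded_above_near_interior:
  fixes f :: "'x::{real_vector,topological_space} \<Rightarrow> 'z::real_vector set"
  assumes "is_tvs TYPE('x)" "sv_convex f"
    and "lattice_bounded_above_near f x0" "x \<in> interior (sv_dom f)"
  shows "lattice_bounded_above_near f x"
proof -
  obtain U a where U: "U \<in> nbhds x0" "\<forall>u\<in>U. a \<in> f u"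
    using assms(3) unfolding lattice_bounded_above_near_def lattice_bounded_above_on_def by blast
  obtain t y where ty: "0 < t" "t < 1" "y \<in> sv_dom f" "x = t *\<^sub>R x0 + (1 - t) *\<^sub>R y"
    using tvs_interior_convex_combination[OF assms(1,4)] by blast
  obtain b where b: "b \<in> f y"
    using ty(3) unfolding sv_dom_def by auto
  have "(\<lambda>u. x + t *\<^sub>R (u - x0)) ` U \<in> nbhds x"
    by (rule tvs_affine_image_nbhds[OF assms(1) U(1) ty(1)])
  moreover have "\<forall>x'\<in>(\<lambda>u. x + t *\<^sub>R (u - x0)) ` U. t *\<^sub>R a + (1 - t) *\<^sub>R b \<in> f x'"
    using sv_convex_shift[OF assms(2) ty(1,2,4) _ b] U(2) by blast
  ultimately show ?thesis
    unfolding lattice_bounded_above_near_def lattice_bounded_above_on_def by blast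
qed

lemma efficient_at_interior:
  fixes f :: "'x::{real_vector,topological_space} \<Rightarrow> 'z::{real_vector,topological_space} set"
  assumes "is_tvs TYPE('x)" "is_tvs TYPE('z)" "sv_convex f"
    and "efficient_at f x0" "x \<in> interior (sv_dom f)"
  shows "efficient_at f x"
proof -
  obtain U B where U: "U \<in> nbhds x0" "tvs_bounded B" "\<forall>u\<in>U. f u \<inter> B \<noteq> {}"
    using assms(4) unfolding efficient_at_def by blast
  obtain t y where ty: "0 < t" "t < 1" "y \<in> sv_dom f" "x = t *\<^sub>R x0 + (1 - t) *\<^sub>R y"
    using tvs_interior_convex_combination[OF assms(1,5)] by blast
  obtain b where b: "b \<in> f y"
    using ty(3) unfolding sv_dom_def by auto
  have "(\<lambda>u. x + t *\<^sub>R (u - x0)) ` U \<in> nbhds x"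
    by (rule tvs_affine_image_nbhds[OF assms(1) U(1) ty(1)])
  moreover have "tvs_bounded ((\<lambda>a. t *\<^sub>R a + (1 - t) *\<^sub>R b) ` B)"
    by (rule tvs_bounded_affine_image[OF assms(2) U(2) ty(1)])
  moreover have "f x' \<inter> (\<lambda>a. t *\<^sub>R a + (1 - t) *\<^sub>R b) ` B \<noteq> {}"
    if x': "x' \<in> (\<lambda>u. x + t *\<^sub>R (u - x0)) ` U" for x'
  proof -
    obtain u where u: "u \<in> U" "x' = x + t *\<^sub>R (u - x0)"
      using x' by auto
    then obtain a where "a \<in> f u" "a \<in> B"
      using U(3) by blast
    then show ?thesis
      using sv_convex_shift[OF assms(3) ty(1,2,4) _ b] u(2) by blast
  qed
  ultimately show ?thesis
    unfolding efficient_at_def by blast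
qed

lemma lattice_bounded_above_near_if_upper_lattice_sc:
  assumes "upper_lattice_sc f x0" "f x0 \<noteq> {}"
  shows "lattice_bounded_above_near f x0"
proof -
  have "(\<Union>U\<in>nbhds x0. \<Inter>x\<in>U. f x) \<noteq> {}"
    using assms unfolding upper_lattice_sc_def by auto
  then show ?thesis
    unfolding lattice_bounded_above_near_def lattice_bounded_above_on_def by blast
qed

lemma upper_lattice_sc_if_lattice_bounded_above_near:
  fixes f :: "'x::{real_vector,topological_space} \<Rightarrow> 'z::{real_vector,topological_space} set"
  assumes "is_tvs TYPE('x)" "is_tvs TYPE('z)" "sv_convex f" "lattice_bounded_above_near f x"
  shows "upper_lattice_sc f x"
  unfolding upper_lattice_sc_def
proof
  obtain U a where U: "U \<in> nbhds x" "\<forall>u\<in>U. a \<in> f u"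
    using assms(4) unfolding lattice_bounded_above_near_def lattice_bounded_above_on_def by blast
  fix z assume z: "z \<in> f x"
  show "z \<in> closure (\<Union>U\<in>nbhds x. \<Inter>x\<in>U. f x)"
    unfolding closure_iff_nhds_not_empty
  proof (intro allI impI)
    fix A S assume S: "S \<subseteq> A" "open S" "z \<in> S"
    obtain k where k: "0 < k" "k < 1" "k *\<^sub>R a + (1 - k) *\<^sub>R z \<in> S"
      using tvs_open_contains_convex_combination[OF assms(2) S(2,3)] by blast
    have "(\<lambda>u. x + k *\<^sub>R (u - x)) ` U \<in> nbhds x"
      by (rule tvs_affine_image_nbhds[OF assms(1) U(1) k(1)])
    moreover have "\<forall>x'\<in>(\<lambda>u. x + k *\<^sub>R (u - x)) ` U. k *\<^sub>R a + (1 - k) *\<^sub>R z \<in> f x'"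
      using sv_convex_shift_at[OF assms(3) k(1,2) _ z] U(2) by blast
    ultimately show "(\<Union>U\<in>nbhds x. \<Inter>x\<in>U. f x) \<inter> A \<noteq> {}"
      using k(3) S(1) by blast
  qed
qed

lemma upper_lattice_sc_interior:
  fixes f :: "'x::{real_vector,topological_space} \<Rightarrow> 'z::{real_vector,topological_space} set"
  assumes "is_tvs TYPE('x)" "is_tvs TYPE('z)" "sv_convex f" "x0 \<in> sv_dom f"
    and "upper_lattice_sc f x0" "x \<in> interior (sv_dom f)"
  shows "upper_lattice_sc f x"
proof -
  have "lattice_bounded_above_near f x0"
    using lattice_bounded_above_near_if_upper_lattice_sc assms(4,5) unfolding sv_dom_def by blast
  then have "lattice_bounded_above_near f x"
    using lattice_bounded_above_near_interior assms(1,3,6) by blast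
  then show ?thesis
    by (rule upper_lattice_sc_if_lattice_bounded_above_near[OF assms(1-3)])
qed

lemma lower_continuous_at_interior:
  fixes f :: "'x::{real_vector,topological_space} \<Rightarrow> 'z::{real_vector,topological_space} set"
  assumes "is_tvs TYPE('x)" "is_tvs TYPE('z)" "sv_convex f" "x0 \<in> sv_dom f"
    and "lower_continuous_at f x0" "x \<in> interior (sv_dom f)"
  shows "lower_continuous_at f x"
  unfolding lower_continuous_at_def
proof (intro ballI)
  fix z V assume z: "z \<in> f x" and "V \<in> nbhds z"
  then obtain V' where V': "open V'" "z \<in> V'" "V' \<subseteq> V"
    unfolding nbhds_def by auto
  obtain t y where ty: "0 < t" "t < 1" "y \<in> sv_dom f" "x = t *\<^sub>R x0 + (1 - t) *\<^sub>R y"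
    using tvs_interior_convex_combination[OF assms(1,6)] by blast
  obtain b where b: "b \<in> f y"
    using ty(3) unfolding sv_dom_def by auto
  obtain z0 where z0: "z0 \<in> f x0"
    using assms(4) unfolding sv_dom_def by auto
  obtain k where k: "0 < k" "k < 1" "k *\<^sub>R (t *\<^sub>R z0 + (1 - t) *\<^sub>R b) + (1 - k) *\<^sub>R z \<in> V'"
    using tvs_open_contains_convex_combination[OF assms(2) V'(1,2)] by blast
  define \<phi> where "\<phi> = (\<lambda>a. k *\<^sub>R (t *\<^sub>R a + (1 - t) *\<^sub>R b) + (1 - k) *\<^sub>R z)"
  have "\<phi> = (\<lambda>a. (k *\<^sub>R (1 - t) *\<^sub>R b + (1 - k) *\<^sub>R z) + (k * t) *\<^sub>R a)"
    unfolding \<phi>_def by (auto simp: algebra_simps)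
  then have "open (\<phi> -` V')"
    using open_vimage_continuous_on_UNIV[OF tvs_continuous_on_affine[OF assms(2)] V'(1)] by simp
  moreover have "z0 \<in> \<phi> -` V'"
    using k(3) unfolding \<phi>_def by simp
  ultimately have "\<phi> -` V' \<in> nbhds z0"
    unfolding nbhds_def by blast
  then obtain U where U: "U \<in> nbhds x0" "\<forall>u\<in>U. f u \<inter> \<phi> -` V' \<noteq> {}"
    using assms(5) z0 unfolding lower_continuous_at_def by blast
  have "(\<lambda>u. x + (k * t) *\<^sub>R (u - x0)) ` U \<in> nbhds x"
    using tvs_affine_image_nbhds[OF assms(1) U(1)] k ty by simp
  moreover have "f x' \<inter> V \<noteq> {}" if x': "x' \<in> (\<lambda>u. x + (k * t) *\<^sub>R (u - x0)) ` U" for x'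
  proof -
    obtain u where u: "u \<in> U" "x' = x + (k * t) *\<^sub>R (u - x0)"
      using x' by auto
    then obtain a where a: "a \<in> f u" "\<phi> a \<in> V'"
      using U(2) by blast
    have "t *\<^sub>R a + (1 - t) *\<^sub>R b \<in> f (x + t *\<^sub>R (u - x0))"
      by (rule sv_convex_shift[OF assms(3) ty(1,2,4) a(1) b])
    from sv_convex_shift_at[OF assms(3) k(1,2) this z]
    have "\<phi> a \<in> f x'"
      unfolding \<phi>_def u(2) by (simp add: algebra_simps)
    then show ?thesis
      using a(2) V'(3) by blast
  qed
  ultimately show "\<exists>U\<in>nbhds x. \<forall>x'\<in>U. f x' \<inter> V \<noteq> {}"
    by blast
qed

theorem mainTheorem12:
  fixes f :: "'x::{real_vector,topological_space} \<Rightarrow> 'z::{real_vector,topological_space} set"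
    and C :: "'z set" and x0 :: 'x
  assumes "is_tvs TYPE('x)" and "is_tvs TYPE('z)"
    and "C \<noteq> {}" and "closed C" and "convex C" and "cone C"
    and "neg_dual_cone C \<noteq> {(\<lambda>z. 0)}"
    and "\<forall>x. f x \<in> FZC C"
    and "sv_convex f"
    and "x0 \<in> sv_dom f"
  shows "(lattice_bounded_above_near f x0 \<longrightarrow>
            (\<forall>x\<in>interior (sv_dom f). lattice_bounded_above_near f x))
       \<and> (efficient_at f x0 \<longrightarrow> (\<forall>x\<in>interior (sv_dom f). efficient_at f x))
       \<and> (upper_lattice_sc f x0 \<longrightarrow> (\<forall>x\<in>interior (sv_dom f). upper_lattice_sc f x))
       \<and> (lower_continuous_at f x0 \<longrightarrow> (\<forall>x\<in>interior (sv_dom f). lower_continuous_at f x))"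
  using lattice_bounded_above_near_interior[OF assms(1,9)]
    efficient_at_interior[OF assms(1,2,9)]
    upper_lattice_sc_interior[OF assms(1,2,9,10)]
    lower_continuous_at_interior[OF assms(1,2,9,10)]
  by simp

end
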